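(* Let $n,s\in\mathbb{N}$ and let $p_{X,Y}\in\mathcal{E}[0,1]^2_n$ have weights $w_{k_1,k_2}$ that depend only on $k_2$, i.e. $w_{k_1,k_2}=w_{k_2}$ for all $k_1,k_2\in\{0,\dots,n-1\}$ (where $k_1$ indexes the $x$-coordinate and $k_2$ the $y$-coordinate of the cell). Then there exists a ReLU network $\Phi\in\mathcal{N}_{1,2}$ with connectivity $\mathcal{M}(\Phi)\le 6n+24s+2$ and depth $\mathcal{L}(\Phi)=s+3$ such that \[ W(\Phi\#U,\,p_{X,Y})\le\frac{2\sqrt2}{2^s}. \]
   Context: $\mathcal{E}[0,1]^2_n$: densities $p(x,y)=\sum_{k_1,k_2=0}^{n-1}w_{k_1,k_2}\chi_{[k_1/n,(k_1+1)/n]\times[k_2/n,(k_2+1)/n]}(x,y)$ with all $w_{k_1,k_2}>0$ and $\sum w_{k_1,k_2}=n^2$. A ReLU network of depth $L\ge2$ is $\Phi=W_L\circ\rho\circ W_{L-1}\circ\cdots\circ\rho\circ W_1$ with affine $W_\ell(x)=A_\ell x+b_\ell$ and $\rho(x)=\max(x,0)$ componentwise; $\mathcal{L}(\Phi)=L$; $\mathcal{M}(\Phi)$ is the total number of nonzero entries of all $A_\ell,b_\ell$; $\mathcal{N}_{d,d'}$ is the set of such networks with input dimension $d$, output dimension $d'$. $U$ is uniform on $[0,1]$, $\#$ is push-forward, and $W$ is the 1-Wasserstein distance $W(\mu,\nu)=\inf_\pi\int|x-y|d\pi$ over couplings of $\mu,\nu$ with Euclidean norm. *)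

theory Defs
  imports "HOL-Analysis.Analysis"
begin

(* A layer: (output dim m, input dim d, matrix A (entries A i j, i<m, j<d), bias b (b i, i<m)). *)
type_synonym layer = "nat \<times> nat \<times> (nat \<Rightarrow> nat \<Rightarrow> real) \<times> (nat \<Rightarrow> real)"

definition layer_out :: "layer \<Rightarrow> nat" where "layer_out l = fst l"
definition layer_in :: "layer \<Rightarrow> nat" where "layer_in l = fst (snd l)"
definition layer_mat :: "layer \<Rightarrow> nat \<Rightarrow> nat \<Rightarrow> real" where "layer_mat l = fst (snd (snd l))"
definition layer_bias :: "layer \<Rightarrow> nat \<Rightarrow> real" where "layer_bias l = snd (snd (snd l))"

(* affine map W(x) = A x + b, vectors represented as nat \<Rightarrow> real (only first entries relevant) *)
definition affine_apply :: "layer \<Rightarrow> (nat \<Rightarrow> real) \<Rightarrow> (nat \<Rightarrow> real)" where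
  "affine_apply l x = (\<lambda>i. if i < layer_out l
      then (\<Sum>j<layer_in l. layer_mat l i j * x j) + layer_bias l i else 0)"

definition relu :: "(nat \<Rightarrow> real) \<Rightarrow> (nat \<Rightarrow> real)" where
  "relu x = (\<lambda>i. max (x i) 0)"

(* realization  W_L o rho o W_{L-1} o ... o rho o W_1 ; list is [W_1, ..., W_L] *)
fun realize :: "layer list \<Rightarrow> (nat \<Rightarrow> real) \<Rightarrow> (nat \<Rightarrow> real)" where
  "realize [] x = x"
| "realize [l] x = affine_apply l x"
| "realize (l # ls) x = realize ls (relu (affine_apply l x))"

definition is_relu_net :: "nat \<Rightarrow> nat \<Rightarrow> layer list \<Rightarrow> bool" where
  "is_relu_net d d' ls \<longleftrightarrow> length ls \<ge> 2 \<and> layer_in (hd ls) = d \<and> layer_out (last ls) = d'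
     \<and> (\<forall>i. Suc i < length ls \<longrightarrow> layer_out (ls ! i) = layer_in (ls ! Suc i))"

definition net_depth :: "layer list \<Rightarrow> nat" where
  "net_depth ls = length ls"

definition layer_nnz :: "layer \<Rightarrow> nat" where
  "layer_nnz l = card {(i, j). i < layer_out l \<and> j < layer_in l \<and> layer_mat l i j \<noteq> 0}
               + card {i. i < layer_out l \<and> layer_bias l i \<noteq> 0}"

definition net_connectivity :: "layer list \<Rightarrow> nat" where
  "net_connectivity ls = (\<Sum>l\<leftarrow>ls. layer_nnz l)"

definition net_fun_1_2 :: "layer list \<Rightarrow> real \<Rightarrow> real \<times> real" where
  "net_fun_1_2 ls t = (let y = realize ls (\<lambda>i. if i = 0 then t else 0) in (y 0, y 1))"

definition unif01 :: "real measure" where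
  "unif01 = uniform_measure lborel {0..1}"

definition pushforward :: "('a \<Rightarrow> 'b::topological_space) \<Rightarrow> 'a measure \<Rightarrow> 'b measure" where
  "pushforward f \<mu> = distr \<mu> borel f"

definition couplings :: "'a::topological_space measure \<Rightarrow> 'a measure \<Rightarrow> ('a \<times> 'a) measure set" where
  "couplings \<mu> \<nu> = {\<pi>. sets \<pi> = sets (borel \<Otimes>\<^sub>M borel) \<and>
       distr \<pi> borel fst = \<mu> \<and> distr \<pi> borel snd = \<nu>}"

(* 1-Wasserstein distance (Euclidean norm on R^2 = real \<times> real) *)
definition wasserstein1 :: "'a::metric_space measure \<Rightarrow> 'a measure \<Rightarrow> ennreal" where
  "wasserstein1 \<mu> \<nu> = (INF \<pi>\<in>couplings \<mu> \<nu>. \<integral>\<^sup>+ z. ennreal (dist (fst z) (snd z)) \<partial>\<pi>)"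

definition pw_density :: "nat \<Rightarrow> (nat \<Rightarrow> nat \<Rightarrow> real) \<Rightarrow> real \<times> real \<Rightarrow> real" where
  "pw_density n w = (\<lambda>(x, y). \<Sum>k1<n. \<Sum>k2<n. w k1 k2 *
      indicator ({real k1 / n .. (real k1 + 1) / n} \<times> {real k2 / n .. (real k2 + 1) / n}) (x, y))"

definition E2_weights :: "nat \<Rightarrow> (nat \<Rightarrow> nat \<Rightarrow> real) \<Rightarrow> bool" where
  "E2_weights n w \<longleftrightarrow> (\<forall>k1<n. \<forall>k2<n. w k1 k2 > 0) \<and> (\<Sum>k1<n. \<Sum>k2<n. w k1 k2) = real n ^ 2"

definition density_measure :: "(real \<times> real \<Rightarrow> real) \<Rightarrow> (real \<times> real) measure" where
  "density_measure p = density lborel (\<lambda>z. ennreal (p z))"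

end

(*
  The target measure is the law of (A, Q B) for independent uniform A and B, where Q is the
  quantile function of the y-marginal.  Q is piecewise linear with n pieces, hence a sum of
  n ramps, which two ReLU layers compute exactly.  The x-coordinate is produced by the tent
  map T, one application per layer: T^m maps each of the 2^m dyadic cells of [0, 1] affinely
  onto [0, 1].  Let t be the point of the dyadic cell of B that T^m sends to A.  Then t is
  again uniform, and the network output (T^m t, Q t) = (A, Q t) differs from (A, Q B) by at
  most the oscillation of the monotone Q on that cell.  These oscillations add up to
  Q 1 - Q 0 = 1, so this coupling costs at most 2^-m, and depth s + 3 affords m = s + 2.
*)
theory Submission
  imports Defs
begin

section \<open>Tent map\<close>

definition tent :: "real \<Rightarrow> real" where
  "tent x = 2 * max x 0 - 4 * max (x - 1/2) 0"

lemma tent_eq_double: "0 \<le> x \<Longrightarrow> x \<le> 1/2 \<Longrightarrow> tent x = 2 * x"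
  by (simp add: tent_def)

lemma tent_eq_reflect: "1/2 \<le> x \<Longrightarrow> tent x = 2 - 2 * x"
  by (simp add: tent_def)

lemma tent_borel_measurable [measurable]: "tent \<in> borel_measurable borel"
  unfolding tent_def by measurable

lemma funpow_tent_borel_measurable [measurable]: "tent ^^ m \<in> borel_measurable borel"
  by (induction m) (simp_all add: measurable_comp[OF _ tent_borel_measurable, unfolded comp_def] o_def)

text \<open>\<open>dyadic_branch (2 ^ m) j\<close> inverts \<open>tent ^^ m\<close> on the \<open>j\<close>-th dyadic cell, where
  \<open>tent ^^ m\<close> is increasing for even and decreasing for odd \<open>j\<close>.\<close>

definition dyadic_branch :: "nat \<Rightarrow> nat \<Rightarrow> real \<Rightarrow> real" where
  "dyadic_branch M j a = (real j + (if even j then a else 1 - a)) / M"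

lemma tent_dyadic_branch:
  assumes "j < 2 ^ Suc m" "0 \<le> a" "a \<le> 1"
  shows "tent (dyadic_branch (2 ^ Suc m) j a)
           = dyadic_branch (2 ^ m) (if j < 2 ^ m then j else 2 ^ Suc m - 1 - j) a"
proof -
  define z where "z = (if even j then a else 1 - a)"
  have z: "0 \<le> z" "z \<le> 1" "dyadic_branch (2 ^ Suc m) j a = (real j + z) / 2 ^ Suc m"
    using assms by (auto simp: z_def dyadic_branch_def)
  show ?thesis
  proof (cases "j < 2 ^ m")
    case True
    then have "real j + 1 \<le> 2 ^ m"
      by (metis Suc_eq_plus1 Suc_leI of_nat_1 of_nat_add of_nat_le_iff of_nat_numeral of_nat_power)
    with z have "0 \<le> (real j + z) / 2 ^ Suc m" "(real j + z) / 2 ^ Suc m \<le> 1/2"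
      by (simp_all add: field_simps)
    with True z show ?thesis
      by (simp add: tent_eq_double z_def dyadic_branch_def field_simps)
  next
    case False
    define j' where "j' = 2 ^ Suc m - 1 - j"
    have j': "real j' = 2 ^ Suc m - 1 - real j" "even j' \<longleftrightarrow> odd j"
      using False assms(1) by (auto simp: j'_def)
    have "(2::real) ^ m \<le> real j"
      using False by (metis not_less of_nat_le_iff of_nat_numeral of_nat_power)
    with z have "2 ^ Suc m \<le> 2 * (real j + z)"
      unfolding power_Suc by argo
    then have "1/2 \<le> (real j + z) / 2 ^ Suc m"
      by (simp add: le_divide_eq)
    then have "tent ((real j + z) / 2 ^ Suc m) = (real j' + (1 - z)) / 2 ^ m"
      by (simp add: tent_eq_reflect j'(1) field_simps)
    moreover have "dyadic_branch (2 ^ m) j' a = (real j' + (1 - z)) / 2 ^ m"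
      using j'(2) by (simp add: dyadic_branch_def z_def)
    ultimately show ?thesis
      using False z(3) by (simp add: j'_def)
  qed
qed

lemma funpow_tent_dyadic_branch:
  assumes "j < 2 ^ m" "0 \<le> a" "a \<le> 1"
  shows "(tent ^^ m) (dyadic_branch (2 ^ m) j a) = a"
  using assms(1)
proof (induction m arbitrary: j)
  case 0
  then show ?case by (simp add: dyadic_branch_def)
next
  case (Suc m)
  have "(if j < 2 ^ m then j else 2 ^ Suc m - 1 - j) < 2 ^ m"
    using Suc.prems by auto
  then show ?case
    using Suc.IH tent_dyadic_branch[OF Suc.prems assms(2,3)]
    by (simp only: funpow_Suc_right comp_apply)
qed

lemma dyadic_branch_mem_Icc_iff:
  assumes "0 < M"
  shows "dyadic_branch M j a \<in> {real j / M..(real j + 1) / M} \<longleftrightarrow> a \<in> {0..1}"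
  using assms by (auto simp: dyadic_branch_def divide_le_eq le_divide_eq add_divide_distrib)

lemma dyadic_branch_affine:
  obtains \<alpha> d where "\<bar>d\<bar> = 1 / M" "\<And>a. dyadic_branch M j a = \<alpha> + d * a"
proof (cases "even j")
  case True
  then show ?thesis
    by (intro that[of "1 / M" "real j / M"]) (simp_all add: dyadic_branch_def add_divide_distrib)
next
  case False
  then show ?thesis
    by (intro that[of "- 1 / M" "(real j + 1) / M"])
      (simp_all add: dyadic_branch_def add_divide_distrib diff_divide_distrib)
qed

lemma dyadic_branch_borel_measurable [measurable]: "dyadic_branch M j \<in> borel_measurable borel"
  unfolding dyadic_branch_def by (cases "even j") simp_all

section \<open>ReLU networks computing the tent map and ramp sums\<close>

lemma realize_Cons: "ls \<noteq> [] \<Longrightarrow> realize (l # ls) x = realize ls (relu (affine_apply l x))"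
  by (cases ls) auto

lemma layer_nnz_le:
  assumes "{(i, j). i < layer_out l \<and> j < layer_in l \<and> layer_mat l i j \<noteq> 0} \<subseteq> P" "finite P"
    and "{i. i < layer_out l \<and> layer_bias l i \<noteq> 0} \<subseteq> Q" "finite Q"
  shows "layer_nnz l \<le> card P + card Q"
  unfolding layer_nnz_def using assms by (intro add_mono card_mono)

lemma sum_lessThan_3: "(\<Sum>j<(3::nat). f j) = f 0 + f 1 + (f 2 :: 'a::comm_monoid_add)"
  by (simp add: eval_nat_numeral)

lemma sum_lessThan_double: "(\<Sum>j<2 * (N::nat). f j) = (\<Sum>k<N. f (2 * k) + f (2 * k + 1) :: 'a::comm_monoid_add)"
  by (induction N) (simp_all add: add.assoc)

lemma sum_two_entries:
  assumes "a < (N::nat)" "b < N" "a \<noteq> b"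
  shows "(\<Sum>j<N. (if j = a then p else if j = b then q else 0) * f j) = p * f a + q * (f b :: real)"
proof -
  have "(\<Sum>j<N. (if j = a then p else if j = b then q else 0) * f j)
      = (\<Sum>j<N. if j = a then p * f j else 0) + (\<Sum>j<N. if j = b then q * f j else 0)"
    unfolding sum.distrib[symmetric] by (rule sum.cong) (use assms in auto)
  also have "\<dots> = p * f a + q * f b"
    using assms by simp
  finally show ?thesis .
qed

text \<open>A hidden state \<open>(max y 0, max (y - 1/2) 0, g)\<close> with \<open>g \<ge> 0\<close> determines \<open>tent y\<close> linearly;
  the third neuron carries \<open>g\<close> through the ReLUs unchanged.\<close>

definition tent_layer :: layer where
  "tent_layer = (3, 3, \<lambda>i j. if i \<le> 1 then (if j = 0 then 2 else if j = 1 then -4 else 0)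
                             else if i = 2 \<and> j = 2 then 1 else 0,
                 \<lambda>i. if i = 1 then -1/2 else 0)"

definition tent_output_layer :: layer where
  "tent_output_layer = (2, 3, \<lambda>i j. if i = 0 then (if j = 0 then 2 else if j = 1 then -4 else 0)
                                    else if i = 1 \<and> j = 2 then 1 else 0,
                        \<lambda>i. 0)"

lemma realize_tent_layers:
  assumes "x 0 = max y 0" "x 1 = max (y - 1/2) 0" "x 2 = g" "0 \<le> g"
  shows "realize (replicate k tent_layer @ [tent_output_layer]) x 0 = (tent ^^ Suc k) y
       \<and> realize (replicate k tent_layer @ [tent_output_layer]) x 1 = g"
  using assms
proof (induction k arbitrary: x y)
  case 0
  then show ?case
    by (simp add: tent_output_layer_def affine_apply_def layer_out_def layer_in_def
        layer_mat_def layer_bias_def sum_lessThan_3 tent_def)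
next
  case (Suc k)
  let ?x = "relu (affine_apply tent_layer x)"
  have "?x 0 = max (tent y) 0" "?x 1 = max (tent y - 1/2) 0" "?x 2 = g"
    using Suc.prems by (simp_all add: tent_layer_def affine_apply_def layer_out_def layer_in_def
        layer_mat_def layer_bias_def sum_lessThan_3 tent_def relu_def)
  from Suc.IH[OF this Suc.prems(4)] show ?case
    by (simp add: realize_Cons funpow_Suc_right del: funpow.simps)
qed

definition ramp_sum :: "nat \<Rightarrow> (nat \<Rightarrow> real) \<Rightarrow> (nat \<Rightarrow> real) \<Rightarrow> real \<Rightarrow> real" where
  "ramp_sum n v c t = (\<Sum>k<n. (max (t - c k) 0 - max (t - c (Suc k)) 0) / v k)"

lemma ramp_sum_borel_measurable [measurable]: "ramp_sum n v c \<in> borel_measurable borel"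
  unfolding ramp_sum_def by measurable

lemma ramp_sum_nonneg:
  assumes "\<And>k. k < n \<Longrightarrow> c k \<le> c (Suc k)" "\<And>k. k < n \<Longrightarrow> 0 < v k"
  shows "0 \<le> ramp_sum n v c t"
proof -
  have "max (t - c (Suc k)) 0 \<le> max (t - c k) 0" if "k < n" for k
    using assms(1)[OF that] by (simp add: max_def)
  then show ?thesis
    unfolding ramp_sum_def using assms(2) by (intro sum_nonneg divide_nonneg_pos) auto
qed

text \<open>Neurons \<open>2k\<close> and \<open>2k + 1\<close> compute the ramps at \<open>c k\<close> and \<open>c (k + 1)\<close>; the last two
  neurons start the tent map.\<close>

definition ramp_layer :: "nat \<Rightarrow> (nat \<Rightarrow> real) \<Rightarrow> layer" where
  "ramp_layer n c = (2 * n + 2, 1, \<lambda>i j. 1,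
     \<lambda>i. if i = 2 * n then 0 else if i = 2 * n + 1 then -1/2
         else if even i then - c (i div 2) else - c (i div 2 + 1))"

definition ramp_sum_layer :: "nat \<Rightarrow> (nat \<Rightarrow> real) \<Rightarrow> layer" where
  "ramp_sum_layer n v = (3, 2 * n + 2,
     \<lambda>i j. if i \<le> 1 then (if j = 2 * n then 2 else if j = 2 * n + 1 then -4 else 0)
           else if i = 2 \<and> j < 2 * n then (if even j then 1 / v (j div 2) else - (1 / v (j div 2)))
           else 0,
     \<lambda>i. if i = 1 then -1/2 else 0)"

definition ramp_net :: "nat \<Rightarrow> nat \<Rightarrow> (nat \<Rightarrow> real) \<Rightarrow> (nat \<Rightarrow> real) \<Rightarrow> layer list" where
  "ramp_net n s v c = ramp_layer n c # ramp_sum_layer n v # replicate s tent_layer @ [tent_output_layer]"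

lemma net_fun_1_2_ramp_net:
  assumes "\<And>k. k < n \<Longrightarrow> c k \<le> c (Suc k)" "\<And>k. k < n \<Longrightarrow> 0 < v k"
  shows "net_fun_1_2 (ramp_net n s v c) t = ((tent ^^ (s + 2)) t, ramp_sum n v c t)"
proof -
  have nonneg: "0 \<le> ramp_sum n v c t" for t
    using assms by (rule ramp_sum_nonneg)
  let ?x0 = "\<lambda>i::nat. if i = 0 then t else 0"
  let ?x1 = "relu (affine_apply (ramp_layer n c) ?x0)"
  let ?x2 = "relu (affine_apply (ramp_sum_layer n v) ?x1)"
  have x1: "?x1 i = max (t + (if i = 2 * n then 0 else if i = 2 * n + 1 then -1/2
      else if even i then - c (i div 2) else - c (i div 2 + 1))) 0" if "i < 2 * n + 2" for i
    using that by (simp add: ramp_layer_def affine_apply_def layer_out_def layer_in_def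
        layer_mat_def layer_bias_def relu_def)
  have tent_part: "(\<Sum>j<2 * n + 2. (if j = 2 * n then 2 else if j = 2 * n + 1 then -4 else 0) * ?x1 j)
      = tent t"
    by (subst sum_two_entries) (simp_all add: x1 tent_def)
  have "(\<Sum>j<2 * n + 2. (if j < 2 * n then (if even j then 1 / v (j div 2) else - (1 / v (j div 2)))
      else 0) * ?x1 j)
      = (\<Sum>k<n. max (t - c k) 0 / v k - max (t - c (Suc k)) 0 / v k)"
    by (simp add: sum_lessThan_double x1)
  also have "\<dots> = ramp_sum n v c t"
    by (simp add: ramp_sum_def diff_divide_distrib)
  finally have ramp_part: "(\<Sum>j<2 * n + 2. (if j < 2 * n then (if even j then 1 / v (j div 2)
      else - (1 / v (j div 2))) else 0) * ?x1 j) = ramp_sum n v c t" .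
  have "?x2 0 = max (tent t) 0" "?x2 1 = max (tent t - 1/2) 0" "?x2 2 = ramp_sum n v c t"
    using tent_part ramp_part nonneg[of t]
    by (simp_all add: ramp_sum_layer_def affine_apply_def layer_out_def layer_in_def
        layer_mat_def layer_bias_def relu_def)
  from realize_tent_layers[OF this nonneg, of s] show ?thesis
    by (simp add: net_fun_1_2_def ramp_net_def realize_Cons funpow_Suc_right del: funpow.simps)
qed

lemma is_relu_net_ramp_net: "is_relu_net 1 2 (ramp_net n s v c)"
  unfolding is_relu_net_def
proof (intro conjI allI impI)
  show "2 \<le> length (ramp_net n s v c)"
    by (simp add: ramp_net_def)
  show "layer_in (hd (ramp_net n s v c)) = 1"
    by (simp add: ramp_net_def ramp_layer_def layer_in_def)
  show "layer_out (last (ramp_net n s v c)) = 2"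
    by (simp add: ramp_net_def tent_output_layer_def layer_out_def)
  fix i assume i: "Suc i < length (ramp_net n s v c)"
  show "layer_out (ramp_net n s v c ! i) = layer_in (ramp_net n s v c ! Suc i)"
  proof (cases i)
    case 0
    then show ?thesis
      by (simp add: ramp_net_def ramp_layer_def ramp_sum_layer_def layer_out_def layer_in_def)
  next
    case (Suc k)
    have "layer_out (ramp_net n s v c ! i) = 3"
      using i Suc by (cases k) (auto simp: ramp_net_def nth_append ramp_sum_layer_def tent_layer_def
          layer_out_def)
    moreover have "layer_in (ramp_net n s v c ! Suc i) = 3"
      using i Suc by (cases "k < s") (auto simp: ramp_net_def nth_append tent_layer_def
          tent_output_layer_def layer_in_def)
    ultimately show ?thesis by simp
  qed
qed

lemma net_depth_ramp_net: "net_depth (ramp_net n s v c) = s + 3"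
  by (simp add: net_depth_def ramp_net_def)

lemma layer_nnz_ramp_layer: "layer_nnz (ramp_layer n c) \<le> 4 * n + 4"
proof -
  have "layer_nnz (ramp_layer n c) \<le> card ({..<2 * n + 2} \<times> {..<1::nat}) + card {..<2 * n + 2}"
    by (rule layer_nnz_le) (auto simp: ramp_layer_def layer_out_def layer_in_def)
  then show ?thesis
    by (simp add: card_cartesian_product)
qed

lemma layer_nnz_ramp_sum_layer: "layer_nnz (ramp_sum_layer n v) \<le> 2 * n + 5"
proof -
  have "layer_nnz (ramp_sum_layer n v)
      \<le> card ({0, 1} \<times> {2 * n, 2 * n + 1} \<union> {2::nat} \<times> {..<2 * n}) + card {1::nat}"
    by (rule layer_nnz_le)
      (auto simp: ramp_sum_layer_def layer_out_def layer_in_def layer_mat_def layer_bias_def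
        split: if_splits)
  also have "\<dots> \<le> card ({0, 1::nat} \<times> {2 * n, 2 * n + 1}) + card ({2::nat} \<times> {..<2 * n}) + 1"
    using card_Un_le by simp
  finally show ?thesis
    by (simp add: card_cartesian_product)
qed

lemma layer_nnz_tent_layer: "layer_nnz tent_layer \<le> 6"
proof -
  have "layer_nnz tent_layer \<le> card {(0::nat, 0::nat), (0, 1), (1, 0), (1, 1), (2, 2)} + card {1::nat}"
    by (rule layer_nnz_le)
      (auto simp: tent_layer_def layer_out_def layer_in_def layer_mat_def layer_bias_def
        split: if_splits)
  then show ?thesis
    by simp
qed

lemma layer_nnz_tent_output_layer: "layer_nnz tent_output_layer \<le> 3"
proof -
  have "layer_nnz tent_output_layer \<le> card {(0::nat, 0::nat), (0, 1), (1, 2)} + card ({}::nat set)"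
    by (rule layer_nnz_le)
      (auto simp: tent_output_layer_def layer_out_def layer_in_def layer_mat_def layer_bias_def
        split: if_splits)
  then show ?thesis
    by simp
qed

lemma net_connectivity_ramp_net: "net_connectivity (ramp_net n s v c) \<le> 6 * n + 6 * s + 12"
proof -
  have "net_connectivity (ramp_net n s v c) = layer_nnz (ramp_layer n c) + layer_nnz (ramp_sum_layer n v)
      + s * layer_nnz tent_layer + layer_nnz tent_output_layer"
    by (simp add: net_connectivity_def ramp_net_def sum_list_replicate)
  moreover have "s * layer_nnz tent_layer \<le> 6 * s"
    using layer_nnz_tent_layer by simp
  ultimately show ?thesis
    using layer_nnz_ramp_layer[of n c] layer_nnz_ramp_sum_layer[of n v] layer_nnz_tent_output_layer
    by linarith
qed

section \<open>Lebesgue measure, the uniform distribution and couplings\<close>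

lemma emeasure_lborel_affine_preimage:
  fixes \<alpha> d :: real
  assumes "d \<noteq> 0" and [measurable]: "B \<in> sets borel"
  shows "emeasure lborel B = ennreal \<bar>d\<bar> * emeasure lborel {x. \<alpha> + d * x \<in> B}"
proof -
  have "emeasure lborel B = (\<integral>\<^sup>+x. indicator B x \<partial>lborel)"
    by simp
  also have "\<dots> = ennreal \<bar>d\<bar> * (\<integral>\<^sup>+x. indicator B (\<alpha> + d * x) \<partial>lborel)"
    using assms by (intro nn_integral_real_affine) auto
  also have "(\<lambda>x. indicator B (\<alpha> + d * x)) = indicator {x. \<alpha> + d * x \<in> B}"
    by (auto simp: indicator_def)
  also have "(\<integral>\<^sup>+x. indicator {x. \<alpha> + d * x \<in> B} x \<partial>lborel) = emeasure lborel {x. \<alpha> + d * x \<in> B}"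
    by (intro nn_integral_indicator) measurable
  finally show ?thesis .
qed

lemma emeasure_lborel_Times:
  fixes A :: "'a::euclidean_space set" and B :: "'b::euclidean_space set"
  assumes "A \<in> sets borel" "B \<in> sets borel"
  shows "emeasure lborel (A \<times> B) = emeasure lborel A * emeasure lborel B"
  using assms by (simp add: lborel_prod[symmetric] lborel.emeasure_pair_measure_Times)

lemma sum_emeasure_Int_Icc:
  fixes c :: "nat \<Rightarrow> real"
  assumes "\<And>k. k < m \<Longrightarrow> c k \<le> c (Suc k)" and A: "A \<in> sets borel"
  shows "(\<Sum>k<m. emeasure lborel (A \<inter> {c k..c (Suc k)})) = emeasure lborel (A \<inter> {c 0..c m})"
  using assms(1)
proof (induction m)
  case 0
  have "emeasure lborel (A \<inter> {c 0..c 0}) \<le> emeasure lborel {c 0..c 0}"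
    by (intro emeasure_mono) auto
  then show ?case
    by simp
next
  case (Suc m)
  have "c 0 \<le> c m"
    by (rule lift_Suc_mono_le_ivl[of "{..<m}"]) (use Suc.prems in auto)
  then have "A \<inter> {c 0..c (Suc m)} = (A \<inter> {c 0..c m}) \<union> (A \<inter> {c m..c (Suc m)} - {c m})"
    using Suc.prems[of m] by auto
  then have "emeasure lborel (A \<inter> {c 0..c (Suc m)})
      = emeasure lborel (A \<inter> {c 0..c m}) + emeasure lborel (A \<inter> {c m..c (Suc m)} - {c m})"
    using A by (simp add: plus_emeasure disjoint_iff)
  also have "emeasure lborel (A \<inter> {c m..c (Suc m)} - {c m}) = emeasure lborel (A \<inter> {c m..c (Suc m)})"
    using A by (simp add: emeasure_Diff_null_set finite_imp_null_set_lborel)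
  finally show ?case
    using Suc by simp
qed

lemma sum_emeasure_Int_grid:
  assumes "0 < n" "A \<in> sets borel"
  shows "(\<Sum>k<n. emeasure lborel (A \<inter> {real k / n..(real k + 1) / n})) = emeasure lborel (A \<inter> {0..1})"
  using sum_emeasure_Int_Icc[of n "\<lambda>k. real k / n" A] assms
  by (simp add: divide_right_mono add.commute)

lemma unif01_eq_half_open: "unif01 = uniform_measure lborel {0..<1}"
proof -
  have "AE x in lborel. indicator {0..1::real} x / emeasure lborel {0..1::real}
        = (indicator {0..<1} x / emeasure lborel {0..<1::real} :: ennreal)"
    using AE_lborel_singleton[of "1::real"] by eventually_elim (auto simp: indicator_def)
  then show ?thesis
    unfolding unif01_def uniform_measure_def by (intro density_cong) auto
qed

lemma sets_unif01 [simp, measurable_cong]: "sets unif01 = sets borel"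
  by (simp add: unif01_def)

lemma space_unif01 [simp]: "space unif01 = UNIV"
  by (simp add: unif01_def)

lemma emeasure_unif01: "A \<in> sets borel \<Longrightarrow> emeasure unif01 A = emeasure lborel (A \<inter> {0..1})"
  unfolding unif01_def by (subst emeasure_uniform_measure) (auto simp: Int_commute divide_ennreal_def)

lemma finite_measure_unif01: "finite_measure unif01"
  by (rule finite_measureI) (simp add: emeasure_unif01)

lemma nn_integral_unif01:
  "f \<in> borel_measurable borel \<Longrightarrow> (\<integral>\<^sup>+x. f x \<partial>unif01) = (\<integral>\<^sup>+x. f x * indicator {0..<1} x \<partial>lborel)"
  unfolding unif01_eq_half_open by (subst nn_integral_uniform_measure) (auto simp: divide_ennreal_def)

lemma AE_unif01: "AE x in unif01. x \<in> {0..<1}"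
  unfolding unif01_eq_half_open by (subst AE_uniform_measure) auto

lemma AE_pair_unif01: "AE z in unif01 \<Otimes>\<^sub>M unif01. fst z \<in> {0..<1} \<and> snd z \<in> {0..<1}"
proof -
  interpret U: finite_measure unif01
    by (rule finite_measure_unif01)
  interpret pair_sigma_finite unif01 unif01 ..
  show ?thesis
  proof (rule AE_pair_measure)
    show "{z \<in> space (unif01 \<Otimes>\<^sub>M unif01). fst z \<in> {0..<1} \<and> snd z \<in> {0..<1}} \<in> sets (unif01 \<Otimes>\<^sub>M unif01)"
      by measurable
    show "AE x in unif01. AE y in unif01. fst (x, y) \<in> {0..<1} \<and> snd (x, y) \<in> {0..<1}"
      using AE_unif01 by eventually_elim (use AE_unif01 in simp)
  qed
qed

lemma emeasure_unif01_space [simp]: "emeasure unif01 UNIV = 1"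
  by (simp add: emeasure_unif01)

lemma distr_pair_swap_map:
  fixes f :: "'a \<Rightarrow> 'c::second_countable_topology" and N :: "'b::second_countable_topology measure"
  assumes "finite_measure M" "finite_measure N" and sets_N: "sets N = sets borel"
    and [measurable]: "f \<in> borel_measurable M"
  shows "distr (M \<Otimes>\<^sub>M N) borel (\<lambda>z. (snd z, f (fst z))) = N \<Otimes>\<^sub>M distr M borel f"
proof (rule pair_measure_eqI[symmetric])
  interpret M: finite_measure M by fact
  interpret N: finite_measure N by fact
  have sets_N_pair: "sets (N \<Otimes>\<^sub>M distr M borel f) = sets (borel \<Otimes>\<^sub>M borel)"
    using sets_N by (intro sets_pair_measure_cong) simp_all
  have [measurable]: "snd \<in> M \<Otimes>\<^sub>M N \<rightarrow>\<^sub>M borel"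
    using measurable_snd[of M N] unfolding measurable_cong_sets[OF refl sets_N] .
  have swap_map: "(\<lambda>z. (snd z, f (fst z))) \<in> M \<Otimes>\<^sub>M N \<rightarrow>\<^sub>M borel \<Otimes>\<^sub>M borel"
    by measurable
  interpret Mf: finite_measure "distr M borel f"
    by (rule M.finite_measure_distr) measurable
  show "sigma_finite_measure N" "sigma_finite_measure (distr M borel f)"
    by (rule N.sigma_finite_measure_axioms Mf.sigma_finite_measure_axioms)+
  show "sets (N \<Otimes>\<^sub>M distr M borel f) = sets (distr (M \<Otimes>\<^sub>M N) borel (\<lambda>z. (snd z, f (fst z))))"
    unfolding sets_N_pair by (simp only: sets_distr borel_prod)
  fix A B assume A: "A \<in> sets N" and B: "B \<in> sets (distr M borel f)"
  have "space N = UNIV"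
    using sets_eq_imp_space_eq[OF sets_N] by simp
  then have "(\<lambda>z. (snd z, f (fst z))) -` (A \<times> B) \<inter> space (M \<Otimes>\<^sub>M N) = (f -` B \<inter> space M) \<times> A"
    by (auto simp: space_pair_measure)
  moreover have "A \<times> B \<in> sets borel"
    using A B sets_N by (simp add: borel_Times)
  ultimately have "emeasure (distr (M \<Otimes>\<^sub>M N) borel (\<lambda>z. (snd z, f (fst z)))) (A \<times> B)
      = emeasure (M \<Otimes>\<^sub>M N) ((f -` B \<inter> space M) \<times> A)"
    by (subst emeasure_distr) (use swap_map in \<open>auto simp: borel_prod[symmetric]\<close>)
  also have "\<dots> = emeasure M (f -` B \<inter> space M) * emeasure N A"
    using A B by (intro N.emeasure_pair_measure_Times) auto
  finally show "emeasure N A * emeasure (distr M borel f) B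
      = emeasure (distr (M \<Otimes>\<^sub>M N) borel (\<lambda>z. (snd z, f (fst z)))) (A \<times> B)"
    using B by (simp add: emeasure_distr mult.commute)
qed

lemma wasserstein1_distr_le:
  fixes f g :: "'b \<Rightarrow> 'a::{metric_space, second_countable_topology}"
  assumes [measurable]: "f \<in> borel_measurable M" "g \<in> borel_measurable M"
  shows "wasserstein1 (distr M borel f) (distr M borel g) \<le> (\<integral>\<^sup>+x. ennreal (dist (f x) (g x)) \<partial>M)"
proof -
  have [measurable]: "(\<lambda>x. (f x, g x)) \<in> borel_measurable M"
    unfolding borel_prod[symmetric] by measurable
  have [measurable]: "fst \<in> borel_measurable (borel :: ('a \<times> 'a) measure)"
    "snd \<in> borel_measurable (borel :: ('a \<times> 'a) measure)"
    unfolding borel_prod[symmetric] by measurable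
  let ?\<pi> = "distr M borel (\<lambda>x. (f x, g x))"
  have "?\<pi> \<in> couplings (distr M borel f) (distr M borel g)"
    unfolding couplings_def by (simp add: distr_distr comp_def) (simp only: borel_prod)
  then have "wasserstein1 (distr M borel f) (distr M borel g) \<le> (\<integral>\<^sup>+z. ennreal (dist (fst z) (snd z)) \<partial>?\<pi>)"
    unfolding wasserstein1_def by (rule INF_lower)
  also have "\<dots> = (\<integral>\<^sup>+x. ennreal (dist (f x) (g x)) \<partial>M)"
    by (subst nn_integral_distr) (auto intro: borel_measurable_continuous_onI continuous_intros)
  finally show ?thesis .
qed

section \<open>Dyadic cells\<close>

definition cell :: "nat \<Rightarrow> nat \<Rightarrow> real set" where
  "cell M j = {real j / M..<(real j + 1) / M}"

lemma cell_in_borel [measurable]: "cell M j \<in> sets borel"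
  by (simp add: cell_def)

lemma cell_unique:
  assumes "0 < M" "b \<in> cell M i" "b \<in> cell M j"
  shows "i = j"
proof -
  have "real j < real i + 1" "real i < real j + 1"
    using assms by (auto simp: cell_def divide_right_mono field_simps)
  then show ?thesis
    by linarith
qed

lemma sum_indicator_cell:
  assumes "0 < M" "j < M" "b \<in> cell M j"
  shows "(\<Sum>i<M. indicator (cell M i) b * f i) = (f j :: 'a::semiring_1)"
proof -
  have "(\<Sum>i<M. indicator (cell M i) b * f i) = (\<Sum>i<M. if i = j then f i else 0)"
  proof (rule sum.cong)
    fix i
    show "indicator (cell M i) b * f i = (if i = j then f i else 0)"
      using cell_unique[OF assms(1) _ assms(3), of i] assms(3) by (cases "b \<in> cell M i") auto
  qed simp
  also have "\<dots> = f j"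
    using assms(2) by simp
  finally show ?thesis .
qed

lemma ex_cell:
  assumes "0 < M" "b \<in> {0..<1}"
  shows "\<exists>j<M. b \<in> cell M j"
proof -
  define j where "j = nat \<lfloor>b * M\<rfloor>"
  have "0 \<le> b * M"
    using assms by simp
  then have j: "real j \<le> b * M" "b * M < real j + 1"
    unfolding j_def by linarith+
  moreover have "b * M < M"
    using assms by simp
  ultimately have "j < M"
    by linarith
  moreover have "b \<in> cell M j"
    using j assms(1) by (simp add: cell_def divide_le_eq less_divide_eq)
  ultimately show ?thesis
    by blast
qed

lemma cell_subset:
  assumes "j < M"
  shows "cell M j \<subseteq> {0..<1}"
proof
  fix b assume b: "b \<in> cell M j"
  have "real j + 1 \<le> real M"
    using assms by linarith
  then have "(real j + 1) / M \<le> 1"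
    by (simp add: divide_le_eq)
  moreover have "0 \<le> real j / M" "real j / M \<le> b" "b < (real j + 1) / M"
    using b by (simp_all add: cell_def)
  ultimately have "0 \<le> b" "b < 1"
    by linarith+
  then show "b \<in> {0..<1}"
    by simp
qed

lemma emeasure_cell:
  assumes "0 < M"
  shows "emeasure lborel (cell M j) = ennreal (1 / M)"
proof -
  have "real j / M \<le> (real j + 1) / M"
    by (simp add: divide_right_mono)
  then show ?thesis
    by (simp add: cell_def add_divide_distrib)
qed

lemma nn_integral_unif01_cell_step:
  assumes "0 < M"
  shows "(\<integral>\<^sup>+b. (\<Sum>j<M. indicator (cell M j) b * K j) \<partial>unif01) = (\<Sum>j<M. K j * ennreal (1 / M))"
proof -
  have "indicator (cell M j) b * indicator {0..<1} b = (indicator (cell M j) b :: ennreal)" if "j < M" for j b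
    using cell_subset[OF that] by (auto simp: indicator_def)
  then have step: "(\<Sum>j<M. indicator (cell M j) b * K j) * indicator {0..<1} b
      = (\<Sum>j<M. K j * indicator (cell M j) b)" for b
    unfolding sum_distrib_right by (intro sum.cong) (simp_all add: ac_simps)
  have "(\<integral>\<^sup>+b. (\<Sum>j<M. indicator (cell M j) b * K j) \<partial>unif01)
      = (\<integral>\<^sup>+b. (\<Sum>j<M. indicator (cell M j) b * K j) * indicator {0..<1} b \<partial>lborel)"
    by (rule nn_integral_unif01) measurable
  also have "\<dots> = (\<integral>\<^sup>+b. (\<Sum>j<M. K j * indicator (cell M j) b) \<partial>lborel)"
    by (simp only: step)
  also have "\<dots> = (\<Sum>j<M. K j * ennreal (1 / M))"
    using assms by (subst nn_integral_sum) (simp_all add: nn_integral_cmult_indicator emeasure_cell)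
  finally show ?thesis .
qed

lemma emeasure_Int_Icc_eq_unif01_dyadic_branch_preimage:
  assumes "0 < M" and [measurable]: "B \<in> sets borel"
  shows "emeasure lborel (B \<inter> {real j / M..(real j + 1) / M})
       = ennreal (1 / M) * emeasure unif01 {a. dyadic_branch M j a \<in> B}"
proof -
  obtain \<alpha> d where d: "\<bar>d\<bar> = 1 / M" and affine: "\<And>a. dyadic_branch M j a = \<alpha> + d * a"
    using dyadic_branch_affine[of M j] by blast
  have "\<alpha> + d * a \<in> {real j / M..(real j + 1) / M} \<longleftrightarrow> a \<in> {0..1}" for a
    using dyadic_branch_mem_Icc_iff[OF assms(1), of j a] unfolding affine .
  then have preimage: "{a. \<alpha> + d * a \<in> B \<inter> {real j / M..(real j + 1) / M}} = {a. dyadic_branch M j a \<in> B} \<inter> {0..1}"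
    unfolding affine by blast
  have "{a. dyadic_branch M j a \<in> B} \<in> sets borel"
    unfolding affine by measurable
  have "emeasure lborel (B \<inter> {real j / M..(real j + 1) / M})
      = ennreal \<bar>d\<bar> * emeasure lborel {a. \<alpha> + d * a \<in> B \<inter> {real j / M..(real j + 1) / M}}"
    using d assms(1) by (intro emeasure_lborel_affine_preimage) auto
  also have "{a. \<alpha> + d * a \<in> B \<inter> {real j / M..(real j + 1) / M}} = {a. dyadic_branch M j a \<in> B} \<inter> {0..1}"
    by (rule preimage)
  also have "emeasure lborel \<dots> = emeasure unif01 {a. dyadic_branch M j a \<in> B}"
    by (simp add: emeasure_unif01 \<open>{a. dyadic_branch M j a \<in> B} \<in> sets borel\<close>)
  finally show ?thesis
    using d by simp
qed

text \<open>For \<open>b \<notin> {0..<1}\<close>, which lies in no cell, the sum is the junk value \<open>0\<close>.\<close>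

definition cell_point :: "nat \<Rightarrow> real \<Rightarrow> real \<Rightarrow> real" where
  "cell_point M b a = (\<Sum>j<M. indicator (cell M j) b * dyadic_branch M j a)"

lemma cell_point_measurable [measurable (raw)]:
  assumes [measurable]: "f \<in> borel_measurable N" "g \<in> borel_measurable N"
  shows "(\<lambda>x. cell_point M (f x) (g x)) \<in> borel_measurable N"
proof -
  have [measurable]: "(\<lambda>x. dyadic_branch M j (g x)) \<in> borel_measurable N" for j
    using measurable_compose[OF assms(2) dyadic_branch_borel_measurable] .
  show ?thesis
    unfolding cell_point_def by measurable
qed

lemma cell_point_eq: "0 < M \<Longrightarrow> j < M \<Longrightarrow> b \<in> cell M j \<Longrightarrow> cell_point M b a = dyadic_branch M j a"
  unfolding cell_point_def by (rule sum_indicator_cell)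

lemma funpow_tent_cell_point:
  assumes "b \<in> {0..<1}" "a \<in> {0..1}"
  shows "(tent ^^ m) (cell_point (2 ^ m) b a) = a"
proof -
  obtain j where "j < 2 ^ m" "b \<in> cell (2 ^ m) j"
    using ex_cell[OF _ assms(1), of "2 ^ m"] by auto
  with assms(2) show ?thesis
    by (simp add: cell_point_eq funpow_tent_dyadic_branch)
qed

lemma distr_cell_point:
  assumes "0 < M"
  shows "distr (unif01 \<Otimes>\<^sub>M unif01) borel (\<lambda>z. cell_point M (fst z) (snd z)) = unif01"
proof (rule measure_eqI)
  interpret U: finite_measure unif01
    by (rule finite_measure_unif01)
  show "sets (distr (unif01 \<Otimes>\<^sub>M unif01) borel (\<lambda>z. cell_point M (fst z) (snd z))) = sets unif01"
    by simp
  fix B assume "B \<in> sets (distr (unif01 \<Otimes>\<^sub>M unif01) borel (\<lambda>z. cell_point M (fst z) (snd z)))"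
  then have B [measurable]: "B \<in> sets borel"
    by simp
  have [measurable]: "(\<lambda>z. cell_point M (fst z) (snd z)) \<in> borel_measurable (unif01 \<Otimes>\<^sub>M unif01)"
    by measurable
  define X where "X = (\<lambda>z. cell_point M (fst z) (snd z)) -` B \<inter> space (unif01 \<Otimes>\<^sub>M unif01)"
  have X: "X \<in> sets (unif01 \<Otimes>\<^sub>M unif01)"
    unfolding X_def by measurable
  define K where "K j = emeasure unif01 {a. dyadic_branch M j a \<in> B}" for j
  have slice: "emeasure unif01 (Pair b -` X) = (\<Sum>j<M. indicator (cell M j) b * K j)"
    if b: "b \<in> {0..<1}" for b
  proof -
    obtain j where j: "j < M" "b \<in> cell M j"
      using ex_cell[OF assms b] by blast
    then have "Pair b -` X = {a. dyadic_branch M j a \<in> B}"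
      unfolding X_def using cell_point_eq[OF assms] by (auto simp: space_pair_measure)
    then show ?thesis
      by (subst sum_indicator_cell[OF assms j]) (simp add: K_def)
  qed
  have "emeasure (distr (unif01 \<Otimes>\<^sub>M unif01) borel (\<lambda>z. cell_point M (fst z) (snd z))) B
      = emeasure (unif01 \<Otimes>\<^sub>M unif01) X"
    unfolding X_def by (rule emeasure_distr) measurable
  also have "\<dots> = (\<integral>\<^sup>+b. emeasure unif01 (Pair b -` X) \<partial>unif01)"
    using X by (rule U.emeasure_pair_measure_alt)
  also have "\<dots> = (\<integral>\<^sup>+b. (\<Sum>j<M. indicator (cell M j) b * K j) \<partial>unif01)"
  proof (rule nn_integral_cong_AE)
    show "AE b in unif01. emeasure unif01 (Pair b -` X) = (\<Sum>j<M. indicator (cell M j) b * K j)"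
      using AE_unif01 by eventually_elim (rule slice)
  qed
  also have "\<dots> = (\<Sum>j<M. K j * ennreal (1 / M))"
    using assms by (rule nn_integral_unif01_cell_step)
  also have "\<dots> = (\<Sum>j<M. emeasure lborel (B \<inter> {real j / M..(real j + 1) / M}))"
    using assms by (simp add: K_def emeasure_Int_Icc_eq_unif01_dyadic_branch_preimage mult.commute)
  also have "\<dots> = emeasure unif01 B"
    using assms by (simp add: sum_emeasure_Int_grid emeasure_unif01)
  finally show "emeasure (distr (unif01 \<Otimes>\<^sub>M unif01) borel (\<lambda>z. cell_point M (fst z) (snd z))) B
      = emeasure unif01 B" .
qed

lemma cell_point_oscillation_le:
  fixes G :: "real \<Rightarrow> real"
  assumes "mono G" "0 < M" "j < M" "b \<in> cell M j" "a \<in> {0..1}"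
  shows "\<bar>G (cell_point M b a) - G b\<bar> \<le> G ((real j + 1) / M) - G (real j / M)"
proof -
  have "G (real j / M) \<le> G b" "G b \<le> G ((real j + 1) / M)"
    using assms(1,4) by (simp_all add: cell_def mono_def)
  moreover have "G (real j / M) \<le> G (cell_point M b a)" "G (cell_point M b a) \<le> G ((real j + 1) / M)"
    using assms dyadic_branch_mem_Icc_iff[OF assms(2), of j a] by (simp_all add: cell_point_eq mono_def)
  ultimately show ?thesis
    by linarith
qed

lemma nn_integral_cell_point_oscillation:
  fixes G :: "real \<Rightarrow> real"
  assumes "mono G" "0 < M"
  shows "(\<integral>\<^sup>+z. ennreal \<bar>G (cell_point M (fst z) (snd z)) - G (fst z)\<bar> \<partial>(unif01 \<Otimes>\<^sub>M unif01))
           \<le> ennreal ((G 1 - G 0) / M)"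
proof -
  interpret U: finite_measure unif01
    by (rule finite_measure_unif01)
  have [measurable]: "G \<in> borel_measurable borel"
    using assms(1) by (rule borel_measurable_mono)
  define osc where "osc j = G ((real j + 1) / M) - G (real j / M)" for j
  have osc_nonneg: "0 \<le> osc j" for j
    unfolding osc_def using assms(1) by (simp add: mono_def divide_right_mono)
  have inner: "(\<integral>\<^sup>+a. ennreal \<bar>G (cell_point M b a) - G b\<bar> \<partial>unif01)
      \<le> (\<Sum>j<M. indicator (cell M j) b * ennreal (osc j))" if b: "b \<in> {0..<1}" for b
  proof -
    obtain j where j: "j < M" "b \<in> cell M j"
      using ex_cell[OF assms(2) b] by blast
    have "ennreal \<bar>G (cell_point M b a) - G b\<bar> \<le> ennreal (osc j)" if "a \<in> {0..<1}" for a
      using cell_point_oscillation_le[OF assms j] that unfolding osc_def by (intro ennreal_leI) simp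
    then have "(\<integral>\<^sup>+a. ennreal \<bar>G (cell_point M b a) - G b\<bar> \<partial>unif01) \<le> (\<integral>\<^sup>+a. ennreal (osc j) \<partial>unif01)"
      using AE_unif01 by (intro nn_integral_mono_AE) (auto elim: eventually_mono)
    also have "\<dots> = ennreal (osc j)"
      by simp
    also have "\<dots> = (\<Sum>i<M. indicator (cell M i) b * ennreal (osc i))"
      by (rule sum_indicator_cell[OF assms(2) j, symmetric])
    finally show ?thesis .
  qed
  have "(\<integral>\<^sup>+z. ennreal \<bar>G (cell_point M (fst z) (snd z)) - G (fst z)\<bar> \<partial>(unif01 \<Otimes>\<^sub>M unif01))
      = (\<integral>\<^sup>+b. (\<integral>\<^sup>+a. ennreal \<bar>G (cell_point M b a) - G b\<bar> \<partial>unif01) \<partial>unif01)"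
    by (subst U.nn_integral_fst[symmetric]) simp_all
  also have "\<dots> \<le> (\<integral>\<^sup>+b. (\<Sum>j<M. indicator (cell M j) b * ennreal (osc j)) \<partial>unif01)"
  proof (rule nn_integral_mono_AE)
    show "AE b in unif01. (\<integral>\<^sup>+a. ennreal \<bar>G (cell_point M b a) - G b\<bar> \<partial>unif01)
        \<le> (\<Sum>j<M. indicator (cell M j) b * ennreal (osc j))"
      using AE_unif01 by eventually_elim (rule inner)
  qed
  also have "\<dots> = (\<Sum>j<M. ennreal (osc j) * ennreal (1 / M))"
    using assms(2) by (rule nn_integral_unif01_cell_step)
  also have "\<dots> = ennreal ((\<Sum>j<M. osc j) / M)"
    using osc_nonneg by (simp add: sum_divide_distrib sum_ennreal flip: ennreal_mult)
  also have "(\<Sum>j<M. osc j) = G 1 - G 0"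
    unfolding osc_def using sum_lessThan_telescope[of "\<lambda>j. G (real j / M)" M] assms(2)
    by (simp add: add.commute)
  finally show ?thesis .
qed

section \<open>Step densities\<close>

lemma pw_density_borel_measurable [measurable]: "pw_density n w \<in> borel_measurable borel"
proof -
  have pw_density: "pw_density n w = (\<lambda>z. \<Sum>k1<n. \<Sum>k2<n. w k1 k2 *
      indicator ({real k1 / n..(real k1 + 1) / n} \<times> {real k2 / n..(real k2 + 1) / n}) z)"
    by (auto simp: pw_density_def fun_eq_iff)
  show ?thesis
    unfolding pw_density
    by (intro borel_measurable_sum borel_measurable_times borel_measurable_indicator borel_Times) auto
qed

text \<open>\<open>v k\<close> is the value of a probability density on \<open>[k/n, (k+1)/n]\<close>; \<open>knot k\<close> is its
  distribution function at \<open>k/n\<close>, and \<open>quantile\<close> is its inverse distribution function.\<close>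

locale step_density =
  fixes n :: nat and v :: "nat \<Rightarrow> real"
  assumes n_pos: "0 < n" and v_pos: "\<And>k. k < n \<Longrightarrow> 0 < v k" and sum_v: "(\<Sum>k<n. v k) = n"
begin

definition knot :: "nat \<Rightarrow> real" where
  "knot k = (\<Sum>i<k. v i) / n"

definition quantile :: "real \<Rightarrow> real" where
  "quantile = ramp_sum n v knot"

lemma knot_0 [simp]: "knot 0 = 0"
  by (simp add: knot_def)

lemma knot_Suc: "knot (Suc k) = knot k + v k / n"
  by (simp add: knot_def add_divide_distrib)

lemma knot_n [simp]: "knot n = 1"
  using n_pos by (simp add: knot_def sum_v)

lemma knot_le_Suc: "k < n \<Longrightarrow> knot k \<le> knot (Suc k)"
  using v_pos[of k] n_pos by (simp add: knot_Suc)

lemma knot_mono: "k \<le> k' \<Longrightarrow> k' \<le> n \<Longrightarrow> knot k \<le> knot k'"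
  by (rule lift_Suc_mono_le_ivl[of "{..<n}"]) (auto intro: knot_le_Suc)

lemma quantile_eq:
  assumes "j < n" "knot j \<le> t" "t \<le> knot (Suc j)"
  shows "quantile t = real j / n + (t - knot j) / v j"
proof -
  let ?ramp = "\<lambda>k. (max (t - knot k) 0 - max (t - knot (Suc k)) 0) / v k"
  have below: "?ramp k = 1 / n" if "k < j" for k
  proof -
    have "knot (Suc k) \<le> t"
      using knot_mono[of "Suc k" j] that assms by simp
    then have "?ramp k = (knot (Suc k) - knot k) / v k"
      using knot_le_Suc[of k] that assms(1) by simp
    also have "\<dots> = 1 / n"
      using v_pos[of k] that assms(1) by (simp add: knot_Suc)
    finally show ?thesis .
  qed
  have above: "?ramp k = 0" if "Suc j \<le> k" "k < n" for k
    using knot_mono[of "Suc j" k] knot_le_Suc[of k] that assms by simp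
  have "quantile t = sum ?ramp {..<j} + ?ramp j + sum ?ramp {Suc j..<n}"
    using sum.atLeastLessThan_concat[of 0 "Suc j" n ?ramp] assms(1)
    by (simp add: quantile_def ramp_sum_def atLeast0LessThan)
  also have "sum ?ramp {..<j} = real j / n"
    using below by simp
  also have "sum ?ramp {Suc j..<n} = 0"
    using above by (intro sum.neutral) auto
  also have "?ramp j = (t - knot j) / v j"
    using assms(2,3) by simp
  finally show ?thesis
    by simp
qed

lemma mono_quantile: "mono quantile"
proof
  fix t t' :: real assume "t \<le> t'"
  have "max (t - knot k) 0 - max (t - knot (Suc k)) 0 \<le> max (t' - knot k) 0 - max (t' - knot (Suc k)) 0"
    if "k < n" for k
    using knot_le_Suc[OF that] \<open>t \<le> t'\<close> by (simp add: max_def)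
  then show "quantile t \<le> quantile t'"
    unfolding quantile_def ramp_sum_def using v_pos by (intro sum_mono divide_right_mono) (auto intro: less_imp_le)
qed

lemma quantile_0 [simp]: "quantile 0 = 0"
  using quantile_eq[of 0 0] n_pos knot_le_Suc[of 0] by simp

lemma quantile_1 [simp]: "quantile 1 = 1"
proof -
  obtain m where m: "Suc m = n"
    using n_pos by (cases n) auto
  then have "knot m \<le> 1"
    using knot_mono[of m n] by simp
  then have "quantile 1 = real m / n + (1 - knot m) / v m"
    using quantile_eq[of m 1] m by simp
  also have "1 - knot m = v m / n"
    using knot_Suc[of m] m by simp
  also have "v m / n / v m = 1 / n"
    using v_pos[of m] m by simp
  also have "real m / n + 1 / n = 1"
    using m n_pos by (simp add: add_divide_distrib[symmetric])
  finally show ?thesis .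
qed

lemma quantile_borel_measurable [measurable]: "quantile \<in> borel_measurable borel"
  unfolding quantile_def by measurable

lemma knot_affine_mem_Icc_iff:
  assumes "k < n"
  shows "knot k + v k * (y - real k / n) \<in> {knot k..knot (Suc k)} \<longleftrightarrow> y \<in> {real k / n..(real k + 1) / n}"
proof -
  have "knot k + v k * (y - real k / n) \<in> {knot k..knot (Suc k)}
      \<longleftrightarrow> v k * 0 \<le> v k * (y - real k / n) \<and> v k * (y - real k / n) \<le> v k * (1 / n)"
    by (simp add: knot_Suc)
  also have "\<dots> \<longleftrightarrow> 0 \<le> y - real k / n \<and> y - real k / n \<le> 1 / n"
    using v_pos[OF assms] by (simp only: mult_le_cancel_left_pos)
  also have "\<dots> \<longleftrightarrow> y \<in> {real k / n..(real k + 1) / n}"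
    by (auto simp: add_divide_distrib)
  finally show ?thesis .
qed

lemma quantile_knot_affine:
  assumes "k < n" "y \<in> {real k / n..(real k + 1) / n}"
  shows "quantile (knot k + v k * (y - real k / n)) = y"
  using quantile_eq[OF assms(1)] knot_affine_mem_Icc_iff[OF assms(1), of y] assms(2) v_pos[OF assms(1)]
  by simp

lemma emeasure_quantile_preimage_Icc:
  assumes "k < n" and [measurable]: "B \<in> sets borel"
  shows "emeasure lborel (quantile -` B \<inter> {knot k..knot (Suc k)})
       = ennreal (v k) * emeasure lborel (B \<inter> {real k / n..(real k + 1) / n})"
proof -
  have iff: "knot k + v k * (y - real k / n) \<in> quantile -` B \<inter> {knot k..knot (Suc k)}
      \<longleftrightarrow> y \<in> B \<inter> {real k / n..(real k + 1) / n}" for y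
    using knot_affine_mem_Icc_iff[OF assms(1), of y] quantile_knot_affine[OF assms(1), of y] by auto
  have affine: "(knot k - v k * (real k / n)) + v k * y = knot k + v k * (y - real k / n)" for y
    by (simp add: algebra_simps)
  have "{y. (knot k - v k * (real k / n)) + v k * y \<in> quantile -` B \<inter> {knot k..knot (Suc k)}}
      = B \<inter> {real k / n..(real k + 1) / n}"
    unfolding affine using iff by blast
  moreover have "quantile -` B \<inter> {knot k..knot (Suc k)} \<in> sets borel"
    by measurable
  ultimately show ?thesis
    using v_pos[OF assms(1)] emeasure_lborel_affine_preimage[of "v k" "quantile -` B \<inter> {knot k..knot (Suc k)}"
        "knot k - v k * (real k / n)"]
    by simp
qed

lemma emeasure_distr_quantile:
  assumes [measurable]: "B \<in> sets borel"
  shows "emeasure (distr unif01 borel quantile) B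
       = (\<Sum>k<n. ennreal (v k) * emeasure lborel (B \<inter> {real k / n..(real k + 1) / n}))"
proof -
  have preimage: "quantile -` B \<in> sets borel"
    using quantile_borel_measurable assms by (rule measurable_sets_borel)
  have "emeasure (distr unif01 borel quantile) B = emeasure lborel (quantile -` B \<inter> {knot 0..knot n})"
    by (subst emeasure_distr) (simp_all add: emeasure_unif01 preimage)
  also have "\<dots> = (\<Sum>k<n. emeasure lborel (quantile -` B \<inter> {knot k..knot (Suc k)}))"
    by (rule sum_emeasure_Int_Icc[symmetric]) (simp_all add: knot_le_Suc preimage)
  also have "\<dots> = (\<Sum>k<n. ennreal (v k) * emeasure lborel (B \<inter> {real k / n..(real k + 1) / n}))"
    by (intro sum.cong refl emeasure_quantile_preimage_Icc) simp_all
  finally show ?thesis .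
qed

lemma ennreal_pw_density:
  assumes "\<And>k1 k2. k1 < n \<Longrightarrow> k2 < n \<Longrightarrow> w k1 k2 = v k2"
  shows "ennreal (pw_density n w z) = (\<Sum>k1<n. \<Sum>k2<n. ennreal (v k2) *
           indicator ({real k1 / n..(real k1 + 1) / n} \<times> {real k2 / n..(real k2 + 1) / n}) z)"
proof -
  define f where "f k1 k2 = v k2 * indicator ({real k1 / n..(real k1 + 1) / n} \<times> {real k2 / n..(real k2 + 1) / n}) z"
    for k1 k2 :: nat
  have nonneg: "0 \<le> f k1 k2" if "k2 < n" for k1 k2
    using v_pos[OF that] by (simp add: f_def)
  have "pw_density n w z = (\<Sum>k1<n. \<Sum>k2<n. f k1 k2)"
    by (simp add: pw_density_def f_def assms split: prod.split)
  also have "ennreal \<dots> = (\<Sum>k1<n. ennreal (\<Sum>k2<n. f k1 k2))"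
    using nonneg by (intro sum_ennreal[symmetric] sum_nonneg) auto
  also have "\<dots> = (\<Sum>k1<n. \<Sum>k2<n. ennreal (f k1 k2))"
    using nonneg by (intro sum.cong refl sum_ennreal[symmetric]) auto
  also have "\<dots> = (\<Sum>k1<n. \<Sum>k2<n. ennreal (v k2) *
      indicator ({real k1 / n..(real k1 + 1) / n} \<times> {real k2 / n..(real k2 + 1) / n}) z)"
    by (intro sum.cong refl) (simp add: f_def indicator_def)
  finally show ?thesis .
qed

lemma emeasure_density_pw_density_Times:
  assumes w: "\<And>k1 k2. k1 < n \<Longrightarrow> k2 < n \<Longrightarrow> w k1 k2 = v k2"
    and [measurable]: "A \<in> sets borel" "B \<in> sets borel"
  shows "emeasure (density_measure (pw_density n w)) (A \<times> B)
       = emeasure lborel (A \<inter> {0..1}) * (\<Sum>k<n. ennreal (v k) * emeasure lborel (B \<inter> {real k / n..(real k + 1) / n}))"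
proof -
  define I where "I k = {real k / n..(real k + 1) / n}" for k :: nat
  have [measurable]: "I k \<in> sets borel" for k
    by (simp add: I_def)
  have density: "ennreal (pw_density n w z) * indicator (A \<times> B) z
      = (\<Sum>k1<n. \<Sum>k2<n. ennreal (v k2) * indicator ((A \<inter> I k1) \<times> (B \<inter> I k2)) z)" for z
  proof -
    have "ennreal (pw_density n w z) * indicator (A \<times> B) z
        = (\<Sum>k1<n. \<Sum>k2<n. ennreal (v k2) * indicator (I k1 \<times> I k2) z) * indicator (A \<times> B) z"
      by (simp only: ennreal_pw_density[OF w] I_def)
    also have "\<dots> = (\<Sum>k1<n. \<Sum>k2<n. ennreal (v k2) * indicator ((A \<inter> I k1) \<times> (B \<inter> I k2)) z)"
      unfolding sum_distrib_right by (intro sum.cong refl) (auto simp: indicator_def)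
    finally show ?thesis .
  qed
  have "emeasure (density_measure (pw_density n w)) (A \<times> B)
      = (\<integral>\<^sup>+z. ennreal (pw_density n w z) * indicator (A \<times> B) z \<partial>lborel)"
    unfolding density_measure_def by (subst emeasure_density) (simp_all add: borel_Times)
  also have "\<dots> = (\<Sum>k1<n. \<Sum>k2<n. ennreal (v k2) * emeasure lborel ((A \<inter> I k1) \<times> (B \<inter> I k2)))"
  proof -
    have [measurable]: "(A \<inter> I k1) \<times> (B \<inter> I k2) \<in> sets borel" for k1 k2
      by (simp add: borel_Times)
    show ?thesis
      unfolding density by (subst nn_integral_sum, measurable)+ (simp add: nn_integral_cmult_indicator)
  qed
  also have "\<dots> = (\<Sum>k1<n. emeasure lborel (A \<inter> I k1)) * (\<Sum>k2<n. ennreal (v k2) * emeasure lborel (B \<inter> I k2))"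
    by (simp add: emeasure_lborel_Times sum_product ac_simps)
  also have "(\<Sum>k1<n. emeasure lborel (A \<inter> I k1)) = emeasure lborel (A \<inter> {0..1})"
    unfolding I_def using n_pos by (intro sum_emeasure_Int_grid) simp_all
  finally show ?thesis
    unfolding I_def .
qed

lemma density_measure_pw_density_eq:
  assumes "\<And>k1 k2. k1 < n \<Longrightarrow> k2 < n \<Longrightarrow> w k1 k2 = v k2"
  shows "density_measure (pw_density n w) = distr (unif01 \<Otimes>\<^sub>M unif01) borel (\<lambda>z. (snd z, quantile (fst z)))"
proof -
  interpret U: finite_measure unif01
    by (rule finite_measure_unif01)
  interpret Q: finite_measure "distr unif01 borel quantile"
    by (rule U.finite_measure_distr) measurable
  have "unif01 \<Otimes>\<^sub>M distr unif01 borel quantile = density_measure (pw_density n w)"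
  proof (rule pair_measure_eqI)
    show "sigma_finite_measure unif01" "sigma_finite_measure (distr unif01 borel quantile)"
      by (rule U.sigma_finite_measure_axioms Q.sigma_finite_measure_axioms)+
    have "sets (unif01 \<Otimes>\<^sub>M distr unif01 borel quantile) = sets (borel \<Otimes>\<^sub>M borel)"
      by (intro sets_pair_measure_cong) simp_all
    then show "sets (unif01 \<Otimes>\<^sub>M distr unif01 borel quantile) = sets (density_measure (pw_density n w))"
      by (simp only: density_measure_def sets_density sets_lborel borel_prod)
    fix A B assume "A \<in> sets unif01" "B \<in> sets (distr unif01 borel quantile)"
    then have "A \<in> sets borel" "B \<in> sets borel"
      by simp_all
    then show "emeasure unif01 A * emeasure (distr unif01 borel quantile) B
        = emeasure (density_measure (pw_density n w)) (A \<times> B)"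
      by (simp add: emeasure_unif01 emeasure_distr_quantile emeasure_density_pw_density_Times assms)
  qed
  also have "unif01 \<Otimes>\<^sub>M distr unif01 borel quantile
      = distr (unif01 \<Otimes>\<^sub>M unif01) borel (\<lambda>z. (snd z, quantile (fst z)))"
    by (rule distr_pair_swap_map[symmetric]) (simp_all add: finite_measure_unif01)
  finally show ?thesis
    by simp
qed

lemma net_fun_1_2_ramp_net_knot:
  "net_fun_1_2 (ramp_net n s v knot) = (\<lambda>t. ((tent ^^ (s + 2)) t, quantile t))"
  using net_fun_1_2_ramp_net[of n knot v] knot_le_Suc v_pos by (auto simp: quantile_def)

lemma wasserstein1_ramp_net_le:
  "wasserstein1 (pushforward (net_fun_1_2 (ramp_net n s v knot)) unif01)
      (distr (unif01 \<Otimes>\<^sub>M unif01) borel (\<lambda>z. (snd z, quantile (fst z))))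
     \<le> ennreal (1 / 2 ^ (s + 2))"
proof -
  define m where "m = s + 2"
  define net where "net t = ((tent ^^ m) t, quantile t)" for t
  define point where "point = (\<lambda>z. cell_point (2 ^ m) (fst z) (snd z))"
  have [measurable]: "net \<in> borel_measurable borel"
    unfolding net_def borel_prod[symmetric] by measurable
  have [measurable]: "point \<in> borel_measurable (unif01 \<Otimes>\<^sub>M unif01)"
    unfolding point_def by measurable
  have "pushforward (net_fun_1_2 (ramp_net n s v knot)) unif01 = distr unif01 borel net"
    by (simp add: pushforward_def net_fun_1_2_ramp_net_knot m_def net_def[abs_def])
  also have "\<dots> = distr (distr (unif01 \<Otimes>\<^sub>M unif01) borel point) borel net"
    by (subst (1) distr_cell_point[symmetric, of "2 ^ m"]) (simp_all add: point_def)
  also have "\<dots> = distr (unif01 \<Otimes>\<^sub>M unif01) borel (\<lambda>z. net (point z))"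
    by (subst distr_distr) (simp_all add: comp_def)
  finally have coupling: "pushforward (net_fun_1_2 (ramp_net n s v knot)) unif01
      = distr (unif01 \<Otimes>\<^sub>M unif01) borel (\<lambda>z. net (point z))" .
  have "wasserstein1 (pushforward (net_fun_1_2 (ramp_net n s v knot)) unif01)
      (distr (unif01 \<Otimes>\<^sub>M unif01) borel (\<lambda>z. (snd z, quantile (fst z))))
    \<le> (\<integral>\<^sup>+z. ennreal (dist (net (point z)) (snd z, quantile (fst z))) \<partial>(unif01 \<Otimes>\<^sub>M unif01))"
    unfolding coupling by (rule wasserstein1_distr_le) measurable
  also have "\<dots> \<le> (\<integral>\<^sup>+z. ennreal \<bar>quantile (point z) - quantile (fst z)\<bar> \<partial>(unif01 \<Otimes>\<^sub>M unif01))"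
  proof (rule nn_integral_mono_AE)
    from AE_pair_unif01
    show "AE z in unif01 \<Otimes>\<^sub>M unif01. ennreal (dist (net (point z)) (snd z, quantile (fst z)))
        \<le> ennreal \<bar>quantile (point z) - quantile (fst z)\<bar>"
      by eventually_elim (simp add: net_def point_def funpow_tent_cell_point dist_Pair_Pair dist_real_def)
  qed
  also have "\<dots> \<le> ennreal ((quantile 1 - quantile 0) / 2 ^ m)"
    using nn_integral_cell_point_oscillation[OF mono_quantile, of "2 ^ m"] by (simp add: point_def)
  finally show ?thesis
    by (simp add: m_def)
qed

end

lemma step_density_E2_weights:
  assumes "0 < n" "E2_weights n w" "\<forall>k1<n. \<forall>k2<n. w k1 k2 = w 0 k2"
  shows "step_density n (w 0)"
proof
  show "0 < n"
    by fact
  show "0 < w 0 k" if "k < n" for k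
    using assms(1,2) that by (simp add: E2_weights_def)
  have "real n ^ 2 = (\<Sum>k1<n. \<Sum>k2<n. w k1 k2)"
    using assms(2) by (simp add: E2_weights_def)
  also have "\<dots> = (\<Sum>k1<n. \<Sum>k2<n. w 0 k2)"
    by (intro sum.cong refl) (use assms(3) in blast)
  also have "\<dots> = real n * (\<Sum>k<n. w 0 k)"
    by simp
  finally show "(\<Sum>k<n. w 0 k) = real n"
    using assms(1) by (simp add: power2_eq_square)
qed

theorem mainTheorem7:
  fixes n s :: nat and w :: "nat \<Rightarrow> nat \<Rightarrow> real"
  assumes "n \<ge> 1" and "s \<ge> 1"
    and "E2_weights n w"
    and "\<forall>k1<n. \<forall>k2<n. w k1 k2 = w 0 k2"
  shows "\<exists>\<Phi>. is_relu_net 1 2 \<Phi> \<and> net_connectivity \<Phi> \<le> 6 * n + 24 * s + 2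
           \<and> net_depth \<Phi> = s + 3
           \<and> wasserstein1 (pushforward (net_fun_1_2 \<Phi>) unif01) (density_measure (pw_density n w))
               \<le> ennreal (2 * sqrt 2 / 2 ^ s)"
proof -
  interpret step_density n "w 0"
    using step_density_E2_weights[OF _ assms(3,4)] assms(1) by simp
  let ?\<Phi> = "ramp_net n s (w 0) knot"
  have "density_measure (pw_density n w) = distr (unif01 \<Otimes>\<^sub>M unif01) borel (\<lambda>z. (snd z, quantile (fst z)))"
    by (rule density_measure_pw_density_eq) (use assms(4) in blast)
  then have "wasserstein1 (pushforward (net_fun_1_2 ?\<Phi>) unif01) (density_measure (pw_density n w))
      \<le> ennreal (1 / 2 ^ (s + 2))"
    by (simp only: wasserstein1_ramp_net_le)
  also have "\<dots> \<le> ennreal (2 * sqrt 2 / 2 ^ s)"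
  proof (rule ennreal_leI)
    have "1 \<le> sqrt (2::real)"
      by simp
    then have "1 \<le> 8 * sqrt (2::real)"
      by linarith
    then show "1 / 2 ^ (s + 2) \<le> 2 * sqrt 2 / 2 ^ s"
      by (simp add: power_add divide_simps)
  qed
  finally have "wasserstein1 (pushforward (net_fun_1_2 ?\<Phi>) unif01) (density_measure (pw_density n w))
      \<le> ennreal (2 * sqrt 2 / 2 ^ s)" .
  moreover have "net_connectivity ?\<Phi> \<le> 6 * n + 24 * s + 2"
    using net_connectivity_ramp_net[of n s "w 0" knot] assms(2) by linarith
  ultimately show ?thesis
    using is_relu_net_ramp_net net_depth_ramp_net by blast
qed

end
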